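(* Let $\kappa$ be an uncountable cardinal, let $X$ be a set of cardinality at least $\kappa$, let $\Gamma$ be the group of all permutations of $X$ acting by application, and let $I_\kappa$ be the ideal of subsets of $X$ of cardinality less than $\kappa$. Then $\Gamma\curvearrowright X, I_\kappa$ is a simple dynamical ideal.
   Context: For a group $\Gamma$ acting on $X$ and $a\subseteq X$, $\mathrm{pstab}(a)=\{\gamma\in\Gamma:\gamma\cdot x=x\ \forall x\in a\}$. A dynamical ideal $\Gamma\curvearrowright X, I$ (a $\Gamma$-invariant ideal containing all singletons) is simple if for all $a\subseteq b$ in $I$, the only normal subgroup of $\mathrm{pstab}(a)$ containing $\mathrm{pstab}(b)$ is $\mathrm{pstab}(a)$ itself. *)

theory Defs
  imports "HOL-Algebra.Algebra" "HOL-Library.Equipollence"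
begin

definition pstab :: "('g, 'm) monoid_scheme \<Rightarrow> ('g \<Rightarrow> 'x \<Rightarrow> 'x) \<Rightarrow> 'x set \<Rightarrow> 'g set" where
  "pstab G \<phi> a = {g \<in> carrier G. \<forall>x\<in>a. \<phi> g x = x}"

definition set_ideal :: "'x set \<Rightarrow> 'x set set \<Rightarrow> bool" where
  "set_ideal S I \<longleftrightarrow> I \<subseteq> Pow S \<and> {} \<in> I \<and>
     (\<forall>a b. a \<in> I \<and> b \<subseteq> a \<longrightarrow> b \<in> I) \<and>
     (\<forall>a\<in>I. \<forall>b\<in>I. a \<union> b \<in> I)"

definition dynamical_ideal :: "('g, 'm) monoid_scheme \<Rightarrow> 'x set \<Rightarrow> ('g \<Rightarrow> 'x \<Rightarrow> 'x) \<Rightarrow> 'x set set \<Rightarrow> bool" where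
  "dynamical_ideal G S \<phi> I \<longleftrightarrow> group_action G S \<phi> \<and> set_ideal S I \<and>
     (\<forall>g\<in>carrier G. \<forall>a\<in>I. \<phi> g ` a \<in> I) \<and> (\<forall>x\<in>S. {x} \<in> I)"

definition simple_dynamical_ideal :: "('g, 'm) monoid_scheme \<Rightarrow> 'x set \<Rightarrow> ('g \<Rightarrow> 'x \<Rightarrow> 'x) \<Rightarrow> 'x set set \<Rightarrow> bool" where
  "simple_dynamical_ideal G S \<phi> I \<longleftrightarrow> dynamical_ideal G S \<phi> I \<and>
     (\<forall>a\<in>I. \<forall>b\<in>I. a \<subseteq> b \<longrightarrow>
        (\<forall>N. normal N (G\<lparr>carrier := pstab G \<phi> a\<rparr>) \<and> pstab G \<phi> b \<subseteq> N \<longrightarrow> N = pstab G \<phi> a))"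

end

theory Submission
  imports Defs
begin

text \<open>Let \<open>a \<subseteq> b\<close> be small, \<open>c = b - a\<close>, and let \<open>N\<close> be normal in \<open>Fix(a)\<close> with \<open>Fix(b) \<subseteq> N\<close>.
  Since \<open>S\<close> has at least \<open>\<kappa>\<close> points, every small set has a disjoint copy of \<open>c\<close> outside it.
  Conjugating \<open>Fix(b)\<close> by the involution exchanging \<open>c\<close> with such a copy \<open>E\<close> shows
  \<open>Fix(a \<union> E) \<subseteq> N\<close>; in particular every exchange of two disjoint small sets outside \<open>a\<close> lies
  in \<open>N\<close>, since it fixes some copy of \<open>c\<close>. If \<open>g \<in> Fix(a)\<close> moves \<open>c\<close> off itself, the exchange
  of \<open>c\<close> and \<open>g(c)\<close> along \<open>g\<close> corrects \<open>g\<close> into \<open>Fix(b)\<close>, so \<open>g \<in> N\<close>; an arbitrary \<open>g\<close> is brought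
  into this situation by first exchanging \<open>c\<close> with a copy disjoint from \<open>b \<union> g(c)\<close>.\<close>

lemma lesspoll_iff_ordLess: "A \<prec> B \<longleftrightarrow> |A| <o |B|"
proof
  assume "A \<prec> B"
  hence "\<not> lepoll B A" by (meson lepoll_antisym lesspoll_def)
  thus "|A| <o |B|" using card_of_ordLess[of B A] by (simp add: lepoll_def)
next
  assume less: "|A| <o |B|"
  hence "\<not> lepoll B A" using card_of_ordLess[of B A] by (simp add: lepoll_def)
  moreover have "lepoll A B"
    using ordLess_imp_ordLeq[OF less] card_of_ordLeq[of A B] by (simp add: lepoll_def)
  ultimately show "A \<prec> B" unfolding lesspoll_def by (meson eqpoll_sym eqpoll_imp_lepoll)
qed

lemma Un_lesspoll_infinite:
  assumes "infinite C" "A \<prec> C" "B \<prec> C"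
  shows "A \<union> B \<prec> C"
  using card_of_Un_ordLess_infinite assms by (simp add: lesspoll_iff_ordLess)

lemma image_lesspoll: "A \<prec> K \<Longrightarrow> f ` A \<prec> K"
  using lesspoll_trans1[OF image_lepoll] .

lemma not_lesspoll_imp_lepoll:
  assumes "\<not> A \<prec> B"
  shows "lepoll B A"
proof -
  have "\<not> |A| <o |B|" using assms by (simp add: lesspoll_iff_ordLess)
  hence "|B| \<le>o |A|" using not_ordLess_iff_ordLeq[OF card_of_Well_order card_of_Well_order] by blast
  thus ?thesis using card_of_ordLeq[of B A] by (simp add: lepoll_def)
qed

lemma lepoll_Diff_lesspoll:
  assumes "infinite K" "lepoll K S" "D \<prec> K"
  shows "lepoll K (S - D)"
proof (rule not_lesspoll_imp_lepoll, rule notI)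
  assume "S - D \<prec> K"
  hence "D \<union> (S - D) \<prec> K" using Un_lesspoll_infinite assms by blast
  hence "S \<prec> K" using lesspoll_trans1 subset_imp_lepoll[of S "D \<union> (S - D)"] by blast
  thus False using lesspoll_trans2[OF _ assms(2)] by blast
qed

lemma disjoint_copy:
  assumes "infinite K" "lepoll K S" "D \<prec> K" "C \<prec> K"
  obtains E f where "E \<subseteq> S - D" "bij_betw f C E"
proof -
  have "lepoll C (S - D)"
    using lepoll_Diff_lesspoll[OF assms(1-3)] assms(4) lesspoll_imp_lepoll lepoll_trans by blast
  then obtain f where "inj_on f C" "f ` C \<subseteq> S - D" unfolding lepoll_def by blast
  thus ?thesis using that unfolding bij_betw_def by blast
qed

abbreviation Fix :: "'a set \<Rightarrow> 'a set \<Rightarrow> ('a \<Rightarrow> 'a) set" where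
  "Fix S a \<equiv> pstab (BijGroup S) (\<lambda>g. g) a"

lemma Fix_eq: "Fix S a = {g \<in> Bij S. \<forall>x\<in>a. g x = x}"
  by (simp add: pstab_def BijGroup_def)

lemma Bij_apply: "g \<in> Bij S \<Longrightarrow> x \<in> S \<Longrightarrow> g x \<in> S"
  by (auto simp: Bij_def bij_betw_def)

lemma BijGroup_mult_apply:
  "f \<in> Bij S \<Longrightarrow> g \<in> Bij S \<Longrightarrow> x \<in> S \<Longrightarrow> (f \<otimes>\<^bsub>BijGroup S\<^esub> g) x = f (g x)"
  by (simp add: BijGroup_def compose_def)

lemma BijGroup_mult_Bij: "f \<in> Bij S \<Longrightarrow> g \<in> Bij S \<Longrightarrow> f \<otimes>\<^bsub>BijGroup S\<^esub> g \<in> Bij S"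
  by (simp add: BijGroup_def compose_Bij)

lemma mult_mem_Fix:
  assumes f: "f \<in> Bij S" and g: "g \<in> Bij S" and "a \<subseteq> S"
    and fg: "\<And>x. x \<in> a \<Longrightarrow> f (g x) = x"
  shows "f \<otimes>\<^bsub>BijGroup S\<^esub> g \<in> Fix S a"
proof -
  have "(f \<otimes>\<^bsub>BijGroup S\<^esub> g) x = x" if "x \<in> a" for x
  proof -
    have "(f \<otimes>\<^bsub>BijGroup S\<^esub> g) x = f (g x)"
      using BijGroup_mult_apply[OF f g] that \<open>a \<subseteq> S\<close> by blast
    also have "\<dots> = x" using fg[OF that] .
    finally show ?thesis .
  qed
  thus ?thesis using BijGroup_mult_Bij[OF f g] by (simp add: Fix_eq)
qed

lemma group_action_BijGroup: "group_action (BijGroup S) S (\<lambda>g. g)"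
  unfolding group_action_def group_hom_def group_hom_axioms_def
  using group_BijGroup by (simp add: hom_def Pi_def)

definition swap_sets :: "'a set \<Rightarrow> 'a set \<Rightarrow> 'a set \<Rightarrow> ('a \<Rightarrow> 'a) \<Rightarrow> 'a \<Rightarrow> 'a" where
  "swap_sets S A B f = (\<lambda>x\<in>S. if x \<in> A then f x else if x \<in> B then inv_into A f x else x)"

locale set_swap =
  fixes S A B f
  assumes A_subset: "A \<subseteq> S" and B_subset: "B \<subseteq> S" and disjoint: "A \<inter> B = {}"
    and bij: "bij_betw f A B"
begin

lemma swap_sets_on_A: "x \<in> A \<Longrightarrow> swap_sets S A B f x = f x"
  using A_subset by (auto simp: swap_sets_def)

lemma swap_sets_on_B: "y \<in> B \<Longrightarrow> swap_sets S A B f y = inv_into A f y"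
  using B_subset disjoint by (auto simp: swap_sets_def)

lemma swap_sets_on_image: "x \<in> A \<Longrightarrow> swap_sets S A B f (f x) = x"
  using swap_sets_on_B bij_betw_apply[OF bij] bij_betw_inv_into_left[OF bij] by simp

lemma swap_sets_outside: "x \<in> S \<Longrightarrow> x \<notin> A \<Longrightarrow> x \<notin> B \<Longrightarrow> swap_sets S A B f x = x"
  by (simp add: swap_sets_def)

lemma swap_sets_swap_sets: "x \<in> S \<Longrightarrow> swap_sets S A B f (swap_sets S A B f x) = x"
proof -
  assume x: "x \<in> S"
  consider "x \<in> A" | "x \<in> B" | "x \<notin> A" "x \<notin> B" by blast
  thus ?thesis
  proof cases
    case 1
    thus ?thesis by (simp add: swap_sets_on_A swap_sets_on_image)
  next
    case 2
    have "inv_into A f x \<in> A"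
      using bij_betw_apply[OF bij_betw_inv_into[OF bij]] 2 .
    moreover have "f (inv_into A f x) = x" using bij_betw_inv_into_right[OF bij] 2 .
    ultimately show ?thesis using 2 swap_sets_on_A swap_sets_on_B by metis
  next
    case 3
    thus ?thesis using x by (simp add: swap_sets_outside)
  qed
qed

lemma swap_sets_in_S: "x \<in> S \<Longrightarrow> swap_sets S A B f x \<in> S"
  using A_subset B_subset bij_betw_apply[OF bij] bij_betw_apply[OF bij_betw_inv_into[OF bij]]
  by (auto simp: swap_sets_def)

lemma swap_sets_Bij: "swap_sets S A B f \<in> Bij S"
proof -
  have "bij_betw (swap_sets S A B f) S S"
    by (rule bij_betw_byWitness[where f' = "swap_sets S A B f"])
      (auto simp: swap_sets_swap_sets swap_sets_in_S)
  thus ?thesis unfolding Bij_def swap_sets_def by simp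
qed

lemma swap_sets_involution:
  "swap_sets S A B f \<otimes>\<^bsub>BijGroup S\<^esub> swap_sets S A B f = \<one>\<^bsub>BijGroup S\<^esub>"
proof -
  have "swap_sets S A B f \<otimes>\<^bsub>BijGroup S\<^esub> swap_sets S A B f
      = compose S (swap_sets S A B f) (swap_sets S A B f)"
    using swap_sets_Bij by (simp add: BijGroup_def)
  also have "\<dots> = (\<lambda>x\<in>S. x)"
    unfolding compose_def by (rule restrict_ext) (simp add: swap_sets_swap_sets)
  also have "\<dots> = \<one>\<^bsub>BijGroup S\<^esub>" by (simp add: BijGroup_def)
  finally show ?thesis .
qed

lemma swap_sets_mem_Fix:
  assumes "a \<subseteq> S" "A \<inter> a = {}" "B \<inter> a = {}"
  shows "swap_sets S A B f \<in> Fix S a"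
  using assms swap_sets_Bij swap_sets_outside by (auto simp: Fix_eq)

end

lemma (in normal) conj_involution_mem_imp_mem:
  assumes "s \<in> carrier G" "s \<otimes> s = \<one>" "h \<in> carrier G" "s \<otimes> h \<otimes> s \<in> H"
  shows "h \<in> H"
proof -
  have inv_s: "inv s = s" using inv_equality assms(1,2) by blast
  have "s \<otimes> (s \<otimes> h \<otimes> s) \<otimes> inv s \<in> H" using inv_op_closed2 assms(1,4) by blast
  also have "s \<otimes> (s \<otimes> h \<otimes> s) \<otimes> inv s = (s \<otimes> s) \<otimes> h \<otimes> (s \<otimes> s)"
    using assms(1,3) by (simp add: inv_s m_assoc)
  also have "\<dots> = h" using assms(2,3) by simp
  finally show ?thesis .
qed

lemma (in group) involution_mult_mem_imp_mem:
  assumes "subgroup H G" "s \<in> H" "s \<otimes> s = \<one>" "g \<in> carrier G" "s \<otimes> g \<in> H"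
  shows "g \<in> H"
proof -
  have "s \<otimes> (s \<otimes> g) \<in> H" using subgroup.m_closed[OF assms(1,2,5)] .
  also have "s \<otimes> (s \<otimes> g) = g"
    using subgroup.mem_carrier[OF assms(1,2)] assms(3,4) by (simp add: m_assoc[symmetric])
  finally show ?thesis .
qed

context
  fixes S :: "'a set" and K :: "'b set" and a b N
  assumes infinite_K: "infinite K" and K_lepoll_S: "lepoll K S"
    and a_subset_b: "a \<subseteq> b" and b_subset_S: "b \<subseteq> S" and b_lesspoll_K: "b \<prec> K"
    and normal_N: "N \<lhd> (BijGroup S)\<lparr>carrier := Fix S a\<rparr>"
    and Fix_b_subset_N: "Fix S b \<subseteq> N"
begin

interpretation N: normal N "(BijGroup S)\<lparr>carrier := Fix S a\<rparr>" by (rule normal_N)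

lemma N_subset_Fix: "N \<subseteq> Fix S a"
  using N.subset by simp

lemma Diff_lesspoll_K: "b - a \<prec> K"
  using b_lesspoll_K lesspoll_trans1 subset_imp_lepoll by blast

lemma Fix_Un_copy_subset_N:
  assumes E: "E \<subseteq> S - b" and f: "bij_betw f (b - a) E"
  shows "Fix S (a \<union> E) \<subseteq> N"
proof
  fix h assume h: "h \<in> Fix S (a \<union> E)"
  interpret \<sigma>: set_swap S "b - a" E f using E f b_subset_S by unfold_locales auto
  let ?\<sigma> = "swap_sets S (b - a) E f"
  have \<sigma>_Fix: "?\<sigma> \<in> Fix S a"
    by (rule \<sigma>.swap_sets_mem_Fix) (use E a_subset_b b_subset_S in auto)
  have h_Bij: "h \<in> Bij S" and h_fix: "\<forall>x\<in>a \<union> E. h x = x" using h by (auto simp: Fix_eq)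
  have "?\<sigma> (h (?\<sigma> x)) = x" if "x \<in> b" for x
  proof (cases "x \<in> a")
    case True
    thus ?thesis using \<sigma>_Fix h_fix by (simp add: Fix_eq)
  next
    case False
    hence "?\<sigma> x = f x" "f x \<in> E" using that \<sigma>.swap_sets_on_A bij_betw_apply[OF f] by auto
    thus ?thesis using h_fix \<sigma>.swap_sets_on_image False that by simp
  qed
  moreover have "(?\<sigma> \<otimes>\<^bsub>BijGroup S\<^esub> h) (?\<sigma> x) = ?\<sigma> (h (?\<sigma> x))" if "x \<in> b" for x
    using BijGroup_mult_apply[OF \<sigma>.swap_sets_Bij h_Bij] \<sigma>.swap_sets_in_S that b_subset_S
    by blast
  ultimately have "?\<sigma> \<otimes>\<^bsub>BijGroup S\<^esub> h \<otimes>\<^bsub>BijGroup S\<^esub> ?\<sigma> \<in> Fix S b"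
    using mult_mem_Fix[OF BijGroup_mult_Bij[OF \<sigma>.swap_sets_Bij h_Bij] \<sigma>.swap_sets_Bij b_subset_S]
    by simp
  hence "?\<sigma> \<otimes>\<^bsub>BijGroup S\<^esub> h \<otimes>\<^bsub>BijGroup S\<^esub> ?\<sigma> \<in> N" using Fix_b_subset_N by blast
  moreover have "h \<in> Fix S a" using h_Bij h_fix by (simp add: Fix_eq)
  ultimately show "h \<in> N"
    using N.conj_involution_mem_imp_mem[of ?\<sigma> h] \<sigma>_Fix \<sigma>.swap_sets_involution by simp
qed

lemma swap_sets_small_mem_N:
  assumes swap: "set_swap S A B f" and "A \<inter> a = {}" "B \<inter> a = {}" "A \<prec> K" "B \<prec> K"
  shows "swap_sets S A B f \<in> N"
proof -
  have "b \<union> (A \<union> B) \<prec> K"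
    using Un_lesspoll_infinite[OF infinite_K] b_lesspoll_K assms(4,5) by blast
  then obtain E f' where E: "E \<subseteq> S - (b \<union> (A \<union> B))" and f': "bij_betw f' (b - a) E"
    using disjoint_copy[OF infinite_K K_lepoll_S _ Diff_lesspoll_K] by metis
  have "swap_sets S A B f \<in> Fix S (a \<union> E)"
    by (rule set_swap.swap_sets_mem_Fix[OF swap]) (use assms(2,3) E a_subset_b b_subset_S in auto)
  thus ?thesis using Fix_Un_copy_subset_N[OF _ f'] E by blast
qed

lemma mem_N_if_involution_mult:
  assumes "s \<in> N" "s \<otimes>\<^bsub>BijGroup S\<^esub> s = \<one>\<^bsub>BijGroup S\<^esub>" "g \<in> Fix S a"
    "s \<otimes>\<^bsub>BijGroup S\<^esub> g \<in> N"
  shows "g \<in> N"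
  by (rule N.involution_mult_mem_imp_mem[OF N.subgroup_axioms]) (use assms in simp_all)

lemma mem_N_if_image_disjoint:
  assumes g: "g \<in> Fix S a" and disj: "g ` (b - a) \<inter> (b - a) = {}"
  shows "g \<in> N"
proof -
  have g_Bij: "g \<in> Bij S" and g_a: "\<forall>x\<in>a. g x = x" using g by (auto simp: Fix_eq)
  have inj: "inj_on g S" using g_Bij by (simp add: Bij_def bij_betw_def)
  have image_S: "g ` (b - a) \<subseteq> S" using Bij_apply[OF g_Bij] b_subset_S by blast
  have image_a: "g ` (b - a) \<inter> a = {}"
  proof (rule ccontr)
    assume "g ` (b - a) \<inter> a \<noteq> {}"
    then obtain x where x: "x \<in> b - a" "g x \<in> a" by auto
    have "g (g x) = g x" using g_a x(2) by blast
    moreover have "x \<in> S" "g x \<in> S" using x a_subset_b b_subset_S by auto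
    ultimately have "g x = x" using inj_onD[OF inj] by blast
    thus False using x by simp
  qed
  have bij: "bij_betw g (b - a) (g ` (b - a))"
    using inj_on_imp_bij_betw[OF inj_on_subset[OF inj]] b_subset_S by blast
  interpret \<sigma>: set_swap S "b - a" "g ` (b - a)" g
    using b_subset_S image_S disj bij by unfold_locales auto
  let ?\<sigma> = "swap_sets S (b - a) (g ` (b - a)) g"
  have \<sigma>_N: "?\<sigma> \<in> N"
    by (rule swap_sets_small_mem_N[OF \<sigma>.set_swap_axioms _ image_a Diff_lesspoll_K
          image_lesspoll[OF Diff_lesspoll_K]]) blast
  have "?\<sigma> (g x) = x" if "x \<in> b" for x
  proof (cases "x \<in> a")
    case True
    thus ?thesis using g_a \<sigma>_N N_subset_Fix by (auto simp: Fix_eq)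
  next
    case False
    thus ?thesis using that \<sigma>.swap_sets_on_image by simp
  qed
  hence "?\<sigma> \<otimes>\<^bsub>BijGroup S\<^esub> g \<in> Fix S b"
    using mult_mem_Fix[OF \<sigma>.swap_sets_Bij g_Bij b_subset_S] by blast
  hence "?\<sigma> \<otimes>\<^bsub>BijGroup S\<^esub> g \<in> N" using Fix_b_subset_N by blast
  thus ?thesis by (rule mem_N_if_involution_mult[OF \<sigma>_N \<sigma>.swap_sets_involution g])
qed

lemma normal_eq_Fix: "N = Fix S a"
proof
  show "N \<subseteq> Fix S a" by (rule N_subset_Fix)
next
  show "Fix S a \<subseteq> N"
  proof
    fix g assume g: "g \<in> Fix S a"
    have g_Bij: "g \<in> Bij S" and g_a: "\<forall>x\<in>a. g x = x" using g by (auto simp: Fix_eq)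
    have "b \<union> g ` (b - a) \<prec> K"
      using Un_lesspoll_infinite[OF infinite_K b_lesspoll_K image_lesspoll[OF Diff_lesspoll_K]] .
    then obtain E f where E: "E \<subseteq> S - (b \<union> g ` (b - a))" and f: "bij_betw f (b - a) E"
      using disjoint_copy[OF infinite_K K_lepoll_S _ Diff_lesspoll_K] by metis
    interpret \<sigma>: set_swap S "b - a" E f using E f b_subset_S by unfold_locales auto
    let ?\<sigma> = "swap_sets S (b - a) E f"
    have E_K: "E \<prec> K"
      using image_lesspoll[OF Diff_lesspoll_K, of f] bij_betw_imp_surj_on[OF f] by simp
    have \<sigma>_N: "?\<sigma> \<in> N"
      by (rule swap_sets_small_mem_N[OF \<sigma>.set_swap_axioms _ _ Diff_lesspoll_K E_K])
        (use E a_subset_b in auto)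
    have \<sigma>_g: "(?\<sigma> \<otimes>\<^bsub>BijGroup S\<^esub> g) x = ?\<sigma> (g x)" if "x \<in> b" for x
      using BijGroup_mult_apply[OF \<sigma>.swap_sets_Bij g_Bij] that b_subset_S by blast
    have "?\<sigma> (g x) \<notin> b - a" if x: "x \<in> b - a" for x
    proof (cases "g x \<in> b - a")
      case True
      hence "?\<sigma> (g x) \<in> E" using \<sigma>.swap_sets_on_A bij_betw_apply[OF f] by simp
      thus ?thesis using E by blast
    next
      case False
      have "g x \<notin> E" using E x by blast
      moreover have "g x \<in> S" using Bij_apply[OF g_Bij] x b_subset_S by blast
      ultimately show ?thesis using False \<sigma>.swap_sets_outside by simp
    qed
    hence "(?\<sigma> \<otimes>\<^bsub>BijGroup S\<^esub> g) ` (b - a) \<inter> (b - a) = {}" using \<sigma>_g by force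
    moreover have "?\<sigma> (g x) = x" if "x \<in> a" for x
      using \<sigma>_N N_subset_Fix g_a that by (auto simp: Fix_eq)
    hence "?\<sigma> \<otimes>\<^bsub>BijGroup S\<^esub> g \<in> Fix S a"
      using mult_mem_Fix[OF \<sigma>.swap_sets_Bij g_Bij] a_subset_b b_subset_S by blast
    ultimately have "?\<sigma> \<otimes>\<^bsub>BijGroup S\<^esub> g \<in> N" by (intro mem_N_if_image_disjoint)
    thus "g \<in> N" by (rule mem_N_if_involution_mult[OF \<sigma>_N \<sigma>.swap_sets_involution g])
  qed
qed

end

lemma set_ideal_lesspoll:
  assumes "infinite K"
  shows "set_ideal S {a. a \<subseteq> S \<and> a \<prec> K}"
  unfolding set_ideal_def
proof (intro conjI allI impI ballI)
  show "{} \<in> {a. a \<subseteq> S \<and> a \<prec> K}" using finite_lesspoll_infinite[OF assms finite.emptyI] by simp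
next
  fix a c assume "a \<in> {a. a \<subseteq> S \<and> a \<prec> K} \<and> c \<subseteq> a"
  thus "c \<in> {a. a \<subseteq> S \<and> a \<prec> K}" by (auto intro: lesspoll_trans1[OF subset_imp_lepoll])
next
  fix a c assume "a \<in> {a. a \<subseteq> S \<and> a \<prec> K}" "c \<in> {a. a \<subseteq> S \<and> a \<prec> K}"
  thus "a \<union> c \<in> {a. a \<subseteq> S \<and> a \<prec> K}" by (auto intro: Un_lesspoll_infinite[OF assms])
qed auto

lemma dynamical_ideal_lesspoll:
  assumes "infinite K"
  shows "dynamical_ideal (BijGroup S) S (\<lambda>g. g) {a. a \<subseteq> S \<and> a \<prec> K}"
  unfolding dynamical_ideal_def
proof (intro conjI ballI)
  show "group_action (BijGroup S) S (\<lambda>g. g)" by (rule group_action_BijGroup)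
  show "set_ideal S {a. a \<subseteq> S \<and> a \<prec> K}" using set_ideal_lesspoll[OF assms] .
next
  fix g a assume "g \<in> carrier (BijGroup S)" "a \<in> {a. a \<subseteq> S \<and> a \<prec> K}"
  hence "g \<in> Bij S" "a \<subseteq> S" "a \<prec> K" by (simp_all add: BijGroup_def)
  thus "g ` a \<in> {a. a \<subseteq> S \<and> a \<prec> K}"
    using Bij_apply[of g S] image_lesspoll by blast
next
  fix x assume "x \<in> S"
  thus "{x} \<in> {a. a \<subseteq> S \<and> a \<prec> K}" using finite_lesspoll_infinite[OF assms, of "{x}"] by simp
qed

theorem mainTheorem16:
  fixes S :: "'a set" and K :: "'b set"
  assumes "\<not> countable K"
    and "K \<lesssim> S"
  shows "simple_dynamical_ideal (BijGroup S) S (\<lambda>g. g) {a. a \<subseteq> S \<and> a \<prec> K}"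
  unfolding simple_dynamical_ideal_def
proof (intro conjI ballI impI allI)
  have infinite_K: "infinite K" using assms(1) countable_finite by blast
  show "dynamical_ideal (BijGroup S) S (\<lambda>g. g) {a. a \<subseteq> S \<and> a \<prec> K}"
    by (rule dynamical_ideal_lesspoll[OF infinite_K])
  fix a b N
  assume "a \<in> {a. a \<subseteq> S \<and> a \<prec> K}" "b \<in> {a. a \<subseteq> S \<and> a \<prec> K}" "a \<subseteq> b"
    and "N \<lhd> (BijGroup S)\<lparr>carrier := Fix S a\<rparr> \<and> Fix S b \<subseteq> N"
  thus "N = Fix S a" by (intro normal_eq_Fix[OF infinite_K assms(2)]) auto
qed

end
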